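(* Let datasets be finite multisets $D=\{(x_i,y_i)\}_{i=1}^n$ of records with $x_i,y_i\in[0,1]$. Define $g(D)=(S_{xy}(D),\,S_{(1-x)y}(D),\,S_{1-y}(D))\in\mathbb{R}^3$, where $S_{xy}(D)=\sum_{i=1}^n x_iy_i$, $S_{(1-x)y}(D)=\sum_{i=1}^n (1-x_i)y_i$ and $S_{1-y}(D)=\sum_{i=1}^n (1-y_i)$. Then the global $\ell_1$-sensitivity of $g$ under the add/remove neighboring relation equals $1$, i.e. $\Delta_1(g):=\sup_{D\sim D'}\|g(D)-g(D')\|_1=1$.
   Context: Two datasets $D$ and $D'$ are neighboring, written $D\sim D'$, if one is obtained from the other by adding or removing a single record $(x^*,y^* )\in[0,1]^2$ (add/remove or unbounded model). $\|\cdot\|_1$ is the $\ell_1$-norm on $\mathbb{R}^3$. *)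

theory Defs
  imports Complex_Main "HOL-Library.Multiset" "HOL-Library.Extended_Real"
begin

type_synonym rec2 = "real \<times> real"
type_synonym dataset = "rec2 multiset"

definition valid_record :: "rec2 \<Rightarrow> bool" where
  "valid_record r \<longleftrightarrow> fst r \<in> {0..1} \<and> snd r \<in> {0..1}"

definition valid_dataset :: "dataset \<Rightarrow> bool" where
  "valid_dataset D \<longleftrightarrow> (\<forall>r \<in># D. valid_record r)"

definition neighboring :: "dataset \<Rightarrow> dataset \<Rightarrow> bool" where
  "neighboring D D' \<longleftrightarrow>
     (\<exists>r. valid_record r \<and> (D' = add_mset r D \<or> D = add_mset r D'))"

definition S_xy :: "dataset \<Rightarrow> real" where
  "S_xy D = (\<Sum>(x, y) \<in># D. x * y)"

definition S_1mx_y :: "dataset \<Rightarrow> real" where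
  "S_1mx_y D = (\<Sum>(x, y) \<in># D. (1 - x) * y)"

definition S_1my :: "dataset \<Rightarrow> real" where
  "S_1my D = (\<Sum>(x, y) \<in># D. 1 - y)"

definition g :: "dataset \<Rightarrow> real \<times> real \<times> real" where
  "g D = (S_xy D, S_1mx_y D, S_1my D)"

definition l1_norm3 :: "real \<times> real \<times> real \<Rightarrow> real" where
  "l1_norm3 v = (case v of (a, b, c) \<Rightarrow> \<bar>a\<bar> + \<bar>b\<bar> + \<bar>c\<bar>)"

definition diff3 :: "real \<times> real \<times> real \<Rightarrow> real \<times> real \<times> real \<Rightarrow> real \<times> real \<times> real" where
  "diff3 u v = (case u of (a, b, c) \<Rightarrow> case v of (a', b', c') \<Rightarrow> (a - a', b - b', c - c'))"

text \<open>Global l1-sensitivity, taken as a supremum in the extended reals so that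
  it is well defined even if the set were unbounded.\<close>
definition global_l1_sensitivity :: "(dataset \<Rightarrow> real \<times> real \<times> real) \<Rightarrow> ereal" where
  "global_l1_sensitivity f =
     Sup {ereal (l1_norm3 (diff3 (f D) (f D'))) | D D'.
            valid_dataset D \<and> valid_dataset D' \<and> neighboring D D'}"

end

theory Submission
  imports Defs
begin

text \<open>Adding a record (x, y) increases the three coordinates of g by x y, (1 - x) y and
  1 - y. For a record in the unit square these increments are nonnegative and sum to 1,
  so every add/remove step moves g by exactly 1 in the l1 norm.\<close>

lemma diff3_g_add_mset:
  "diff3 (g (add_mset (x, y) D)) (g D) = (x * y, (1 - x) * y, 1 - y)"
  by (simp add: g_def diff3_def S_xy_def S_1mx_y_def S_1my_def)

lemma l1_norm3_diff3_commute: "l1_norm3 (diff3 u v) = l1_norm3 (diff3 v u)"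
  by (cases u; cases v) (simp add: l1_norm3_def diff3_def abs_minus_commute)

lemma l1_norm3_nonneg_eq_sum:
  assumes "0 \<le> a" "0 \<le> b" "0 \<le> c"
  shows "l1_norm3 (a, b, c) = a + b + c"
  using assms by (simp add: l1_norm3_def)

lemma l1_norm3_diff3_g_add_mset:
  assumes "valid_record r"
  shows "l1_norm3 (diff3 (g (add_mset r D)) (g D)) = 1"
proof -
  obtain x y where r: "r = (x, y)" by fastforce
  with assms have "0 \<le> x" "x \<le> 1" "0 \<le> y" "y \<le> 1"
    by (auto simp: valid_record_def)
  then have "l1_norm3 (x * y, (1 - x) * y, 1 - y) = x * y + (1 - x) * y + (1 - y)"
    by (intro l1_norm3_nonneg_eq_sum) auto
  also have "\<dots> = 1"
    by (simp add: algebra_simps)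
  finally show ?thesis
    by (simp add: r diff3_g_add_mset)
qed

lemma l1_norm3_diff3_g_neighboring:
  assumes "neighboring D D'"
  shows "l1_norm3 (diff3 (g D) (g D')) = 1"
  using assms l1_norm3_diff3_g_add_mset l1_norm3_diff3_commute
  unfolding neighboring_def by metis

theorem mainTheorem2:
  shows "global_l1_sensitivity g = 1"
proof -
  let ?r = "(0, 0) :: rec2"
  have r: "valid_record ?r"
    by (simp add: valid_record_def)
  then have witness: "valid_dataset {#} \<and> valid_dataset {#?r#} \<and> neighboring {#?r#} {#}"
    by (auto simp: valid_dataset_def neighboring_def)
  have "{ereal (l1_norm3 (diff3 (g D) (g D'))) | D D'.
           valid_dataset D \<and> valid_dataset D' \<and> neighboring D D'} = {1}"
    using witness l1_norm3_diff3_g_neighboring by fastforce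
  then show ?thesis
    unfolding global_l1_sensitivity_def by simp
qed

end
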